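(* Let $f$ and $m$ be natural numbers such that $\gcd(f,2m)=2$, $\gcd(f+2,2m)=2$, $f^2+f+1\equiv m \pmod{2m}$, and $m+3\le f\le 2m-4$. Then there exists a cyclic DCA$(4,2m+1;2m)$ satisfying P1 and P2.
   Context: Let $(G,+)$ be an abelian group of order $n$. A difference covering array DCA$(k,\eta;n)$ over $G$ is an $\eta\times k$ matrix $Q=[q(i,j)]$ (rows indexed $0,\dots,\eta-1$, columns $0,\dots,k-1$) with entries in $G$ such that for every pair of distinct columns $j,j'$ the multiset $\{q(i,j)-q(i,j') : 0\le i\le \eta-1\}$ contains every element of $G$ at least once. It is cyclic if $G=\mathbb{Z}_n$. A DCA$(k,n+1;n)$ is taken in normalized form: all entries of its last row (row $n$) and of its last column (column $k-1$) equal $0$. Such a DCA satisfies P1 if $0$ occurs at least twice in every column, and satisfies P2 if for all distinct columns $j,j'$ with $j\neq k-1\neq j'$, the set $\{q(i,j)-q(i,j') : 0\le i\le n-1\}$ equals $G\setminus\{0\}$. *)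

theory Defs
  imports Main
begin

text \<open>A (cyclic) difference covering array DCA(k, eta; n) over Z_n, represented as a
  function Q :: nat => nat => int (row index, column index) whose entries on
  rows 0..eta-1 and columns 0..k-1 are residues in {0..<n}; subtraction is taken mod n.\<close>

definition is_cyclic_DCA :: "nat \<Rightarrow> nat \<Rightarrow> nat \<Rightarrow> (nat \<Rightarrow> nat \<Rightarrow> int) \<Rightarrow> bool" where
  "is_cyclic_DCA k eta n Q \<longleftrightarrow>
     (\<forall>i<eta. \<forall>j<k. Q i j \<in> {0..<int n}) \<and>
     (\<forall>j<k. \<forall>j'<k. j \<noteq> j' \<longrightarrow>
        (\<forall>g\<in>{0..<int n}. \<exists>i<eta. (Q i j - Q i j') mod int n = g))"

definition DCA_normalized :: "nat \<Rightarrow> nat \<Rightarrow> (nat \<Rightarrow> nat \<Rightarrow> int) \<Rightarrow> bool" where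
  "DCA_normalized k n Q \<longleftrightarrow>
     (\<forall>j<k. Q n j = 0) \<and> (\<forall>i\<le>n. Q i (k - 1) = 0)"

definition DCA_P1 :: "nat \<Rightarrow> nat \<Rightarrow> (nat \<Rightarrow> nat \<Rightarrow> int) \<Rightarrow> bool" where
  "DCA_P1 k n Q \<longleftrightarrow> (\<forall>j<k. card {i. i \<le> n \<and> Q i j = 0} \<ge> 2)"

definition DCA_P2 :: "nat \<Rightarrow> nat \<Rightarrow> (nat \<Rightarrow> nat \<Rightarrow> int) \<Rightarrow> bool" where
  "DCA_P2 k n Q \<longleftrightarrow>
     (\<forall>j<k. \<forall>j'<k. j \<noteq> j' \<longrightarrow> j \<noteq> k - 1 \<longrightarrow> j' \<noteq> k - 1 \<longrightarrow>
        (\<lambda>i. (Q i j - Q i j') mod int n) ` {..<n} = {1..<int n})"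

end

theory Submission
  imports Defs "HOL-Number_Theory.Number_Theory"
begin

text \<open>Since \<open>m\<close> is odd, \<open>\<int>\<^sub>2\<^sub>m \<cong> \<int>\<^sub>m \<times> \<int>\<^sub>2\<close>. Put \<open>w = f - m\<close>; the hypotheses make \<open>w\<close> odd with
  \<open>0 < w < m\<close>, \<open>w\<^sup>2 + w + 1 \<equiv> 0 (mod m)\<close> and \<open>1 - w\<close> a unit mod \<open>m\<close>. Index the first \<open>2m\<close> rows
  by \<open>(s, t) \<in> {0,1} \<times> \<int>\<^sub>m\<close> and give the three non-zero columns the \<open>\<int>\<^sub>m\<close>-components
  \<open>t\<close>, \<open>w t + (1 - w) s\<close>, \<open>w\<^sup>2 t + (1 - w)(1 - s)\<close>. The \<open>\<int>\<^sub>m\<close>-part of the difference of two columns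
  is \<open>(1 - w)\<close> times an affine map of \<open>t\<close>, so every residue \<open>u\<close> is hit once in each block \<open>s\<close>.
  The \<open>\<int>\<^sub>2\<close>-components are chosen from the parity of least residues so that the two rows
  hitting \<open>u \<noteq> 0\<close> carry different parities, while a row hitting \<open>0\<close> carries odd parity;
  by the CRT the differences then realise every non-zero element of \<open>\<int>\<^sub>2\<^sub>m\<close>.\<close>

text \<open>Congruences modulo \<open>m\<close> are checked below by writing the difference as an explicit
  combination of known multiples of \<open>m\<close>, chiefly \<open>w\<^sup>2 + w + 1\<close>.\<close>

lemma dvd_combination1: "(m::int) dvd a \<Longrightarrow> c = p*a \<Longrightarrow> m dvd c"
  by simp

lemma dvd_combination2: "(m::int) dvd a \<Longrightarrow> m dvd b \<Longrightarrow> c = p*a + q*b \<Longrightarrow> m dvd c"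
  by simp

lemma dvd_combination3:
  "(m::int) dvd a \<Longrightarrow> m dvd b \<Longrightarrow> m dvd d \<Longrightarrow> c = p*a + q*b + r*d \<Longrightarrow> m dvd c"
  by simp

lemma dvd_diff_trans: "(m::int) dvd (a - b) \<Longrightarrow> m dvd (b - c) \<Longrightarrow> m dvd (a - c)"
  using dvd_add[of m "a - b" "b - c"] by simp

lemma dvd_diff_common: "(m::int) dvd (a - u) \<Longrightarrow> m dvd (b - u) \<Longrightarrow> m dvd (a - b)"
  using dvd_diff[of m "a - u" "b - u"] by simp

lemma dvd_diff_neg: "(m::int) dvd (a - b) \<Longrightarrow> m dvd (- a - - b)"
  using dvd_mult[of m "a - b" "-1"] by simp

lemma exists_mult_cong:
  fixes a m u :: int
  assumes "coprime a m"
  shows "\<exists>z. m dvd (a*z - u)"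
proof -
  obtain x where "[a*x = 1] (mod m)" using cong_solve_coprime_int assms by blast
  then have "[a*x*u = 1*u] (mod m)" by (rule cong_scalar_right)
  then show ?thesis by (metis cong_iff_dvd_diff mult.assoc mult_1)
qed

subsection \<open>The Chinese remainder theorem in \<open>\<int>\<^sub>2\<^sub>m\<close>\<close>

definition crt_pair :: "int \<Rightarrow> int \<Rightarrow> int \<Rightarrow> int" where
  "crt_pair m a c = c mod m + m * ((a + c mod m) mod 2)"

lemma crt_pair_range: "m > 0 \<Longrightarrow> 0 \<le> crt_pair m a c \<and> crt_pair m a c < 2*m"
proof -
  assume m: "m > 0"
  define r where "r = c mod m"
  have "(a + r) mod 2 = 0 \<or> (a + r) mod 2 = 1" by presburger
  moreover have "0 \<le> r" "r < m" using m unfolding r_def by auto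
  ultimately show ?thesis unfolding crt_pair_def r_def[symmetric] using m by auto
qed

lemma crt_pair_cong_mod: "m dvd (crt_pair m a c - c)"
proof -
  have "m dvd (c mod m - c)" by (simp add: mod_eq_dvd_iff[symmetric])
  then show ?thesis unfolding crt_pair_def by (simp add: diff_add_eq[symmetric])
qed

lemma crt_pair_cong_2:
  assumes "odd m"
  shows "2 dvd (crt_pair m a c - a)"
proof -
  obtain q where q: "m = 2*q + 1" using assms by (metis oddE)
  define r where "r = c mod m"
  define b where "b = (a + r) mod 2"
  have b: "b = (a + r) - 2*((a + r) div 2)"
    unfolding b_def by (simp add: minus_div_mult_eq_mod[symmetric])
  have "crt_pair m a c - a = r + m*b - a" unfolding crt_pair_def r_def b_def by simp
  also have "\<dots> = 2*(r - (a + r) div 2 + q*b)" using q b by (simp add: algebra_simps)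
  finally show ?thesis by simp
qed

lemma mod_double_eqI:
  fixes m z g :: int
  assumes "odd m" "0 \<le> g" "g < 2*m" "m dvd (z - g)" "2 dvd (z - g)"
  shows "z mod (2*m) = g"
proof -
  have "coprime 2 m" using assms(1) by (simp add: coprime_left_2_iff_odd)
  then have "2*m dvd (z - g)" using assms(4,5) divides_mult by blast
  then have "z mod (2*m) = g mod (2*m)" by (simp add: mod_eq_dvd_iff)
  then show ?thesis using assms by simp
qed

lemma mod_double_nonzero:
  fixes m d g a :: int
  assumes "m dvd (d - g)" "2 dvd (d - a)" and "m dvd g \<Longrightarrow> odd a" and "m > 0"
  shows "d mod (2*m) \<in> {1..<2*m}"
proof -
  have "d mod (2*m) \<noteq> 0"
  proof
    assume "d mod (2*m) = 0"
    then have "2*m dvd d" by (simp add: dvd_eq_mod_eq_0)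
    then have "m dvd d" "2 dvd d" using dvd_mult_left dvd_mult_right by blast+
    then have "m dvd g" "2 dvd a"
      using dvd_diff[of m d "d - g"] dvd_diff[of 2 d "d - a"] assms(1,2) by simp_all
    then show False using assms(3) by blast
  qed
  moreover have "0 \<le> d mod (2*m)" "d mod (2*m) < 2*m" using assms(4) by simp_all
  ultimately show ?thesis by simp
qed

text \<open>\<open>D\<close> is a column difference whose \<open>\<int>\<^sub>m\<close>- and \<open>\<int>\<^sub>2\<close>-components are \<open>G\<close> and \<open>A\<close>.\<close>

lemma nonzero_residue_hits:
  fixes m g :: int and N :: nat and D G A :: "nat \<Rightarrow> int"
  assumes m: "m > 1" "odd m" and g: "g \<in> {1..<2*m}"
    and DG: "\<And>i. i < N \<Longrightarrow> m dvd (D i - G i)"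
    and DA: "\<And>i. i < N \<Longrightarrow> 2 dvd (D i - A i)"
    and split: "\<exists>i0<N. \<exists>i1<N. m dvd (G i0 - g) \<and> m dvd (G i1 - g) \<and>
                  (\<not> m dvd g \<longrightarrow> odd (A i0 - A i1))"
    and zero_odd: "\<And>i. i < N \<Longrightarrow> m dvd G i \<Longrightarrow> odd (A i)"
  shows "\<exists>i<N. D i mod (2*m) = g"
proof -
  obtain i0 i1 where ii: "i0 < N" "i1 < N" "m dvd (G i0 - g)" "m dvd (G i1 - g)"
    "\<not> m dvd g \<longrightarrow> odd (A i0 - A i1)" using split by blast
  have hit: "D i mod (2*m) = g" if i: "i < N" "m dvd (G i - g)" "2 dvd (D i - g)" for i
    using mod_double_eqI[OF m(2) _ _ dvd_diff_trans[OF DG[OF i(1)] i(2)] i(3)] g by simp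
  show ?thesis
  proof (cases "m dvd g")
    case True
    then obtain k where k: "g = m*k" by blast
    have "0 < m*k" using g k by simp
    then have "0 < k" using m(1) by (simp add: zero_less_mult_iff)
    moreover have "m*k < m*2" using g k by (simp add: mult.commute)
    then have "k < 2" using m(1) by simp
    ultimately have "g = m" using k by simp
    have "m dvd G i0" using dvd_add[OF ii(3) True] by simp
    then have "odd (A i0)" using zero_odd ii(1) by blast
    then have "2 dvd (D i0 - g)" using DA[OF ii(1)] \<open>g = m\<close> m(2) by presburger
    then show ?thesis using hit ii(1,3) by blast
  next
    case False
    then have "odd (A i0 - A i1)" using ii(5) by blast
    then have "2 dvd (D i0 - g) \<or> 2 dvd (D i1 - g)" using DA[OF ii(1)] DA[OF ii(2)] by presburger
    then show ?thesis using hit ii(1-4) by blast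
  qed
qed

lemma diff_residues_eq_nonzero:
  fixes m :: int and N :: nat and D G A :: "nat \<Rightarrow> int"
  assumes m: "m > 1" "odd m"
    and DG: "\<And>i. i < N \<Longrightarrow> m dvd (D i - G i)"
    and DA: "\<And>i. i < N \<Longrightarrow> 2 dvd (D i - A i)"
    and split: "\<And>u. \<exists>i0<N. \<exists>i1<N. m dvd (G i0 - u) \<and> m dvd (G i1 - u) \<and>
                      (\<not> m dvd u \<longrightarrow> odd (A i0 - A i1))"
    and zero_odd: "\<And>i. i < N \<Longrightarrow> m dvd G i \<Longrightarrow> odd (A i)"
  shows "(\<lambda>i. D i mod (2*m)) ` {..<N} = {1..<2*m}"
proof
  show "(\<lambda>i. D i mod (2*m)) ` {..<N} \<subseteq> {1..<2*m}"
  proof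
    fix x assume "x \<in> (\<lambda>i. D i mod (2*m)) ` {..<N}"
    then obtain i where i: "i < N" "x = D i mod (2*m)" by blast
    then show "x \<in> {1..<2*m}"
      using mod_double_nonzero[OF DG[OF i(1)] DA[OF i(1)] zero_odd[OF i(1)]] m(1) by simp
  qed
  show "{1..<2*m} \<subseteq> (\<lambda>i. D i mod (2*m)) ` {..<N}"
  proof
    fix g assume "g \<in> {1..<2*m}"
    then obtain i where "i < N" "D i mod (2*m) = g"
      using nonzero_residue_hits[OF m _ DG DA split zero_odd] by blast
    then show "g \<in> (\<lambda>i. D i mod (2*m)) ` {..<N}" by force
  qed
qed

lemma neg_diff_residues_eq_nonzero:
  fixes m :: int and N :: nat and D G A :: "nat \<Rightarrow> int"
  assumes m: "m > 1" "odd m"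
    and DG: "\<And>i. i < N \<Longrightarrow> m dvd (D i - G i)"
    and DA: "\<And>i. i < N \<Longrightarrow> 2 dvd (D i - A i)"
    and split: "\<And>u. \<exists>i0<N. \<exists>i1<N. m dvd (G i0 - u) \<and> m dvd (G i1 - u) \<and>
                      (\<not> m dvd u \<longrightarrow> odd (A i0 - A i1))"
    and zero_odd: "\<And>i. i < N \<Longrightarrow> m dvd G i \<Longrightarrow> odd (A i)"
  shows "(\<lambda>i. (- D i) mod (2*m)) ` {..<N} = {1..<2*m}"
proof (rule diff_residues_eq_nonzero[OF m, where G="\<lambda>i. - G i" and A="\<lambda>i. - A i"])
  fix i assume i: "i < N"
  show "m dvd (- D i - - G i)" by (rule dvd_diff_neg[OF DG[OF i]])
  show "2 dvd (- D i - - A i)" by (rule dvd_diff_neg[OF DA[OF i]])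
  show "m dvd - G i \<Longrightarrow> odd (- A i)" using zero_odd[OF i] by simp
next
  fix u
  obtain i0 i1 where "i0 < N" "i1 < N" "m dvd (G i0 - - u)" "m dvd (G i1 - - u)"
      "\<not> m dvd (- u) \<longrightarrow> odd (A i0 - A i1)" using split[of "- u"] by blast
  then show "\<exists>i0<N. \<exists>i1<N. m dvd (- G i0 - u) \<and> m dvd (- G i1 - u) \<and>
               (\<not> m dvd u \<longrightarrow> odd (- A i0 - - A i1))"
    using dvd_diff_neg[of m "G i0" "- u"] dvd_diff_neg[of m "G i1" "- u"] by auto
qed

lemma residue_hits:
  fixes m g :: int and N :: nat and D G A :: "nat \<Rightarrow> int"
  assumes m: "odd m"
    and DG: "\<And>i. i < N \<Longrightarrow> m dvd (D i - G i)"
    and DA: "\<And>i. i < N \<Longrightarrow> 2 dvd (D i - A i)"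
    and split: "\<exists>i0<N. \<exists>i1<N. m dvd (G i0 - g) \<and> m dvd (G i1 - g) \<and> odd (A i0 - A i1)"
    and g: "0 \<le> g" "g < 2*m"
  shows "\<exists>i<N. D i mod (2*m) = g"
proof -
  obtain i0 i1 where ii: "i0 < N" "i1 < N" "m dvd (G i0 - g)" "m dvd (G i1 - g)"
    "odd (A i0 - A i1)" using split by blast
  have "2 dvd (D i0 - g) \<or> 2 dvd (D i1 - g)" using DA[OF ii(1)] DA[OF ii(2)] ii(5) by presburger
  then show ?thesis
    using mod_double_eqI[OF m g] dvd_diff_trans[OF DG] ii by blast
qed

lemma exists_row_index:
  fixes m :: nat and s x :: int
  assumes "m > 0" "s = 0 \<or> s = 1"
  shows "\<exists>i<2*m. int (i div m) = s \<and> int m dvd (int (i mod m) - x)"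
proof -
  define r where "r = nat (x mod int m)"
  have r: "r < m" "int r = x mod int m"
    using assms(1) unfolding r_def by (simp_all add: nat_less_iff)
  define i where "i = nat s * m + r"
  have "i div m = nat s" "i mod m = r" "i < 2*m" unfolding i_def using r(1) assms(2) by auto
  moreover have "int m dvd (x mod int m - x)" by (simp add: mod_eq_dvd_iff[symmetric])
  ultimately show ?thesis using r(2) assms(2) by (intro exI[of _ i]) auto
qed

subsection \<open>Parity of least residues\<close>

definition res_parity :: "int \<Rightarrow> int \<Rightarrow> int" where
  "res_parity m y = (if y mod m = 0 then 1 else (y mod m) mod 2)"

lemma res_parity_cong: "m dvd (x - y) \<Longrightarrow> res_parity m x = res_parity m y"
  unfolding res_parity_def by (metis mod_eq_dvd_iff)

lemma res_parity_0 [simp]: "res_parity m 0 = 1"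
  by (simp add: res_parity_def)

lemma res_parity_1: "m > 1 \<Longrightarrow> res_parity m 1 = 1"
  by (simp add: res_parity_def)

lemma odd_res_parity_add_succ:
  assumes "m > 1" "odd m" "\<not> m dvd y"
  shows "odd (res_parity m y + res_parity m (y + 1))"
proof -
  have r0: "y mod m \<noteq> 0" using assms(3) by (simp add: dvd_eq_mod_eq_0)
  have r: "0 < y mod m" "y mod m < m" using assms(1) r0
    by (smt (verit) pos_mod_sign) (use assms(1) in simp)
  have e: "(y + 1) mod m = (y mod m + 1) mod m" by (simp add: mod_add_left_eq)
  show ?thesis
  proof (cases "y mod m = m - 1")
    case True
    then have "(y + 1) mod m = 0" using e by simp
    then show ?thesis using True assms(2) r0 unfolding res_parity_def by simp
  next
    case False
    then have "(y + 1) mod m = y mod m + 1" using e r by simp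
    then show ?thesis using r r0 unfolding res_parity_def by simp
  qed
qed

lemma res_parity_neg_odd:
  assumes "0 < w" "w < m" "odd w" "odd m"
  shows "res_parity m (- w) = 0"
proof -
  have "(- w) mod m = ((m - w) + (-1)*m) mod m" by simp
  also have "\<dots> = m - w" using assms by (subst mod_mult_self1) (intro mod_pos_pos_trivial; simp)
  finally show ?thesis using assms unfolding res_parity_def by simp
qed

definition col_res :: "int \<Rightarrow> nat \<Rightarrow> int \<Rightarrow> int \<Rightarrow> int" where
  "col_res w j s t =
     (if j = 0 then t else if j = 1 then w*t + (1-w)*s else w^2*t + (1-w)*(1-s))"

definition col_par :: "int \<Rightarrow> int \<Rightarrow> nat \<Rightarrow> int \<Rightarrow> int \<Rightarrow> int" where
  "col_par M w j s t =
     (if j = 0 then s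
      else if j = 1 then s + res_parity M (col_res w 1 s t)
      else s + res_parity M (w^2 * col_res w 2 s t + 1))"

definition dca_array :: "nat \<Rightarrow> int \<Rightarrow> nat \<Rightarrow> nat \<Rightarrow> int" where
  "dca_array m w i j =
     (if i < 2*m \<and> j < 3
      then crt_pair (int m) (col_par (int m) w j (int (i div m)) (int (i mod m)))
                            (col_res w j (int (i div m)) (int (i mod m)))
      else 0)"

locale dca_params =
  fixes m :: nat and w :: int
  assumes m_gt_1: "int m > 1" and m_odd: "odd (int m)"
    and w_root: "int m dvd (w^2 + w + 1)" and coprime_one_minus_w: "coprime (1 - w) (int m)"
    and w_odd: "odd w" and w_pos: "0 < w" and w_less_m: "w < int m"
begin

definition res_col :: "nat \<Rightarrow> nat \<Rightarrow> int" where
  "res_col j i = col_res w j (int (i div m)) (int (i mod m))"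

definition par_col :: "nat \<Rightarrow> nat \<Rightarrow> int" where
  "par_col j i = col_par (int m) w j (int (i div m)) (int (i mod m))"

definition res_diff :: "nat \<Rightarrow> nat \<Rightarrow> nat \<Rightarrow> int" where
  "res_diff j k i = res_col j i - res_col k i"

definition par_diff :: "nat \<Rightarrow> nat \<Rightarrow> nat \<Rightarrow> int" where
  "par_diff j k i = par_col j i - par_col k i"

lemma m_pos: "m > 0" using m_gt_1 by simp

lemma coprime_m_one_minus_w: "coprime (int m) (1-w)"
  using coprime_one_minus_w by (simp add: coprime_commute)

lemma row_block_cases: "i < 2*m \<Longrightarrow> int (i div m) = 0 \<or> int (i div m) = 1"
proof -
  assume "i < 2*m"
  then have "i div m < 2" using m_pos by (simp add: div_less_iff_less_mult mult.commute)
  then show ?thesis by auto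
qed

lemma res_parity_row_block: "s = 0 \<or> s = 1 \<Longrightarrow> res_parity (int m) s = 1"
  using res_parity_0 res_parity_1[OF m_gt_1] by auto

text \<open>In each of the following three lemmas the two rows realising \<open>u\<close> lie in different
  blocks, and their parity difference reduces to \<open>res_parity m y + res_parity m (y + 1)\<close>
  for some \<open>y \<not>\<equiv> 0\<close>, which is odd.\<close>

lemma split_res_diff_0_1:
  "\<exists>i0<2*m. \<exists>i1<2*m. int m dvd (res_diff 0 1 i0 - u) \<and> int m dvd (res_diff 0 1 i1 - u) \<and>
    (\<not> int m dvd u \<longrightarrow> odd (par_diff 0 1 i0 - par_diff 0 1 i1))"
proof -
  obtain z where z: "int m dvd ((1-w)*z - u)"
    using exists_mult_cong[OF coprime_one_minus_w] by blast
  obtain i0 where i0: "i0 < 2*m" "int (i0 div m) = 0" "int m dvd (int (i0 mod m) - z)"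
    using exists_row_index[of m 0 z] m_pos by auto
  obtain i1 where i1: "i1 < 2*m" "int (i1 div m) = 1" "int m dvd (int (i1 mod m) - (z+1))"
    using exists_row_index[of m 1 "z+1"] m_pos by auto
  define t0 where "t0 = int (i0 mod m)"
  define t1 where "t1 = int (i1 mod m)"
  have res0: "res_diff 0 1 i0 = t0 - w*t0" and res1: "res_diff 0 1 i1 = t1 - (w*t1 + (1-w))"
    unfolding res_diff_def res_col_def col_res_def using i0 i1 by (simp_all add: t0_def t1_def)
  have par0: "par_diff 0 1 i0 = - res_parity (int m) (w*t0)"
    and par1: "par_diff 0 1 i1 = - res_parity (int m) (w*t1 + (1-w))"
    unfolding par_diff_def par_col_def col_par_def col_res_def using i0 i1 by (simp_all add: t0_def t1_def)
  have hit0: "int m dvd (res_diff 0 1 i0 - u)" unfolding res0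
    by (rule dvd_combination2[OF i0(3)[folded t0_def] z, where p="1-w" and q=1])
      (simp add: algebra_simps eval_nat_numeral)
  have hit1: "int m dvd (res_diff 0 1 i1 - u)" unfolding res1
    by (rule dvd_combination2[OF i1(3)[folded t1_def] z, where p="1-w" and q=1])
      (simp add: algebra_simps eval_nat_numeral)
  have red0: "res_parity (int m) (w*t0) = res_parity (int m) (w*z)"
    by (rule res_parity_cong, rule dvd_combination1[OF i0(3)[folded t0_def], where p=w])
      (simp add: algebra_simps eval_nat_numeral)
  have red1: "res_parity (int m) (w*t1 + (1-w)) = res_parity (int m) (w*z + 1)"
    by (rule res_parity_cong, rule dvd_combination1[OF i1(3)[folded t1_def], where p=w])
      (simp add: algebra_simps eval_nat_numeral)
  have "\<not> int m dvd u \<longrightarrow> odd (par_diff 0 1 i0 - par_diff 0 1 i1)"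
  proof
    assume nu: "\<not> int m dvd u"
    have nd: "\<not> int m dvd (w*z)"
    proof
      assume h: "int m dvd (w*z)"
      have "int m dvd u"
        by (rule dvd_combination3[OF h w_root z, where p="(1-w)*w^2" and q="(1-w)^2*z" and r="-1"])
          (simp add: algebra_simps eval_nat_numeral)
      then show False using nu by simp
    qed
    have "odd (res_parity (int m) (w*z) + res_parity (int m) (w*z+1))"
      by (rule odd_res_parity_add_succ[OF m_gt_1 m_odd nd])
    then show "odd (par_diff 0 1 i0 - par_diff 0 1 i1)" unfolding par0 par1 red0 red1 by presburger
  qed
  then show ?thesis using i0(1) i1(1) hit0 hit1 by blast
qed

lemma odd_par_diff_0_1: "i < 2*m \<Longrightarrow> int m dvd res_diff 0 1 i \<Longrightarrow> odd (par_diff 0 1 i)"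
proof -
  assume i: "i < 2*m" and d: "int m dvd res_diff 0 1 i"
  define s where "s = int (i div m)"
  define t where "t = int (i mod m)"
  have s01: "s = 0 \<or> s = 1" using row_block_cases[OF i] s_def by simp
  have "res_diff 0 1 i = (1-w)*(t - s)"
    unfolding res_diff_def res_col_def col_res_def s_def[symmetric] t_def[symmetric] by (simp add: algebra_simps eval_nat_numeral)
  then have "int m dvd (t - s)"
    using d coprime_dvd_mult_right_iff[OF coprime_m_one_minus_w] by metis
  then have "res_parity (int m) (w*t + (1-w)*s) = res_parity (int m) s"
    by (intro res_parity_cong, rule dvd_combination1[where p=w])
      (simp add: algebra_simps eval_nat_numeral)
  moreover have "par_diff 0 1 i = - res_parity (int m) (w*t + (1-w)*s)"
    unfolding par_diff_def par_col_def col_par_def col_res_def s_def[symmetric] t_def[symmetric] by simp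
  ultimately show ?thesis using res_parity_row_block[OF s01] by simp
qed

lemma split_res_diff_0_2:
  "\<exists>i0<2*m. \<exists>i1<2*m. int m dvd (res_diff 0 2 i0 - u) \<and> int m dvd (res_diff 0 2 i1 - u) \<and>
    (\<not> int m dvd u \<longrightarrow> odd (par_diff 0 2 i0 - par_diff 0 2 i1))"
proof -
  obtain z where z: "int m dvd ((1-w)*z - (u + (1-w)))"
    using exists_mult_cong[OF coprime_one_minus_w] by blast
  define x where "x = - w * z"
  have u_eq: "int m dvd ((1-w^2)*x - (1-w) - u)"
    unfolding x_def by (rule dvd_combination2[OF z w_root, where p=1 and q="-(1-w)*z"])
      (simp add: algebra_simps eval_nat_numeral)
  obtain i0 where i0: "i0 < 2*m" "int (i0 div m) = 0" "int m dvd (int (i0 mod m) - x)"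
    using exists_row_index[of m 0 x] m_pos by auto
  obtain i1 where i1: "i1 < 2*m" "int (i1 div m) = 1" "int m dvd (int (i1 mod m) - (x+w))"
    using exists_row_index[of m 1 "x+w"] m_pos by auto
  define t0 where "t0 = int (i0 mod m)"
  define t1 where "t1 = int (i1 mod m)"
  have res0: "res_diff 0 2 i0 = t0 - (w^2*t0 + (1-w))" and res1: "res_diff 0 2 i1 = t1 - w^2*t1"
    unfolding res_diff_def res_col_def col_res_def using i0 i1 by (simp_all add: t0_def t1_def)
  have par0: "par_diff 0 2 i0 = - res_parity (int m) (w^2*(w^2*t0 + (1-w)) + 1)"
    and par1: "par_diff 0 2 i1 = - res_parity (int m) (w^2*(w^2*t1) + 1)"
    unfolding par_diff_def par_col_def col_par_def col_res_def using i0 i1 by (simp_all add: t0_def t1_def)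
  have hit0: "int m dvd (res_diff 0 2 i0 - u)" unfolding res0
    by (rule dvd_combination2[OF i0(3)[folded t0_def] u_eq, where p="1-w^2" and q=1])
      (simp add: algebra_simps eval_nat_numeral)
  have hit1: "int m dvd (res_diff 0 2 i1 - u)" unfolding res1
    by (rule dvd_combination3[OF i1(3)[folded t1_def] u_eq w_root, where p="1-w^2" and q=1 and r="-(w-1)"])
      (simp add: algebra_simps eval_nat_numeral)
  have red0: "res_parity (int m) (w^2*(w^2*t0 + (1-w)) + 1) = res_parity (int m) (w*x + w^2)"
    by (rule res_parity_cong, rule dvd_combination2[OF i0(3)[folded t0_def] w_root, where p="w^4" and q="w*(w-1)*x - (w-1)"])
      (simp add: algebra_simps eval_nat_numeral)
  have red1: "res_parity (int m) (w^2*(w^2*t1) + 1) = res_parity (int m) (w*x + w^2 + 1)"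
    by (rule res_parity_cong, rule dvd_combination2[OF i1(3)[folded t1_def] w_root, where p="w^4" and q="w*(w-1)*(x+w)"])
      (simp add: algebra_simps eval_nat_numeral)
  have "\<not> int m dvd u \<longrightarrow> odd (par_diff 0 2 i0 - par_diff 0 2 i1)"
  proof
    assume nu: "\<not> int m dvd u"
    have nd: "\<not> int m dvd (w*x + w^2)"
    proof
      assume h: "int m dvd (w*x + w^2)"
      have "int m dvd u"
        by (rule dvd_combination3[OF u_eq h w_root, where p="-1" and q="(1-w^2)*w^2" and r="-(1-w^2)*(w-1)*(x+w) + (w-1)"])
          (simp add: algebra_simps eval_nat_numeral)
      then show False using nu by simp
    qed
    have "odd (res_parity (int m) (w*x + w^2) + res_parity (int m) (w*x + w^2 + 1))"
      by (rule odd_res_parity_add_succ[OF m_gt_1 m_odd nd])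
    then show "odd (par_diff 0 2 i0 - par_diff 0 2 i1)" unfolding par0 par1 red0 red1 by presburger
  qed
  then show ?thesis using i0(1) i1(1) hit0 hit1 by blast
qed

lemma odd_par_diff_0_2: "i < 2*m \<Longrightarrow> int m dvd res_diff 0 2 i \<Longrightarrow> odd (par_diff 0 2 i)"
proof -
  assume i: "i < 2*m" and d: "int m dvd res_diff 0 2 i"
  define s where "s = int (i div m)"
  define t where "t = int (i mod m)"
  have s01: "s = 0 \<or> s = 1" using row_block_cases[OF i] s_def by simp
  have "res_diff 0 2 i = (1-w)*((1+w)*t - (1-s))"
    unfolding res_diff_def res_col_def col_res_def s_def[symmetric] t_def[symmetric] by (simp add: algebra_simps eval_nat_numeral)
  then have R: "int m dvd ((1+w)*t - (1-s))"
    using d coprime_dvd_mult_right_iff[OF coprime_m_one_minus_w] by metis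
  have "res_parity (int m) (w^2*(w^2*t + (1-w)*(1-s)) + 1) = res_parity (int m) s"
    by (intro res_parity_cong, rule dvd_combination2[OF R w_root, where p="-(w^2)" and q="w^2*t - (w-1)*(1-s)"])
      (simp add: algebra_simps eval_nat_numeral)
  moreover have "par_diff 0 2 i = - res_parity (int m) (w^2*(w^2*t + (1-w)*(1-s)) + 1)"
    unfolding par_diff_def par_col_def col_par_def col_res_def s_def[symmetric] t_def[symmetric] by simp
  ultimately show ?thesis using res_parity_row_block[OF s01] by simp
qed

lemma split_res_diff_1_2:
  "\<exists>i0<2*m. \<exists>i1<2*m. int m dvd (res_diff 1 2 i0 - u) \<and> int m dvd (res_diff 1 2 i1 - u) \<and>
    (\<not> int m dvd u \<longrightarrow> odd (par_diff 1 2 i0 - par_diff 1 2 i1))"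
proof -
  obtain z where z: "int m dvd ((1-w)*z - (u + (1-w)))"
    using exists_mult_cong[OF coprime_one_minus_w] by blast
  define x where "x = w^2 * z"
  have u_eq: "int m dvd ((w-w^2)*x - (1-w) - u)"
    unfolding x_def by (rule dvd_combination2[OF z w_root, where p=1 and q="(1-w)*(w-1)*z"])
      (simp add: algebra_simps eval_nat_numeral)
  obtain i0 where i0: "i0 < 2*m" "int (i0 div m) = 0" "int m dvd (int (i0 mod m) - x)"
    using exists_row_index[of m 0 x] m_pos by auto
  obtain i1 where i1: "i1 < 2*m" "int (i1 div m) = 1" "int m dvd (int (i1 mod m) - (x - 2*w^2))"
    using exists_row_index[of m 1 "x - 2*w^2"] m_pos by auto
  define t0 where "t0 = int (i0 mod m)"
  define t1 where "t1 = int (i1 mod m)"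
  have res0: "res_diff 1 2 i0 = w*t0 - (w^2*t0 + (1-w))"
    and res1: "res_diff 1 2 i1 = (w*t1 + (1-w)) - w^2*t1"
    unfolding res_diff_def res_col_def col_res_def using i0 i1 by (simp_all add: t0_def t1_def)
  have par0: "par_diff 1 2 i0 = res_parity (int m) (w*t0) - res_parity (int m) (w^2*(w^2*t0 + (1-w)) + 1)"
    and par1: "par_diff 1 2 i1 = res_parity (int m) (w*t1 + (1-w)) - res_parity (int m) (w^2*(w^2*t1) + 1)"
    unfolding par_diff_def par_col_def col_par_def col_res_def using i0 i1 by (simp_all add: t0_def t1_def)
  have hit0: "int m dvd (res_diff 1 2 i0 - u)" unfolding res0
    by (rule dvd_combination2[OF i0(3)[folded t0_def] u_eq, where p="w-w^2" and q=1])
      (simp add: algebra_simps eval_nat_numeral)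
  have hit1: "int m dvd (res_diff 1 2 i1 - u)" unfolding res1
    by (rule dvd_combination3[OF i1(3)[folded t1_def] u_eq w_root, where p="w-w^2" and q=1 and r="2*(1-w)^2"])
      (simp add: algebra_simps eval_nat_numeral)
  have red0a: "res_parity (int m) (w*t0) = res_parity (int m) (w*x)"
    by (rule res_parity_cong, rule dvd_combination1[OF i0(3)[folded t0_def], where p=w])
      (simp add: algebra_simps eval_nat_numeral)
  have red0b: "res_parity (int m) (w^2*(w^2*t0 + (1-w)) + 1) = res_parity (int m) (w*x + w^2)"
    by (rule res_parity_cong, rule dvd_combination2[OF i0(3)[folded t0_def] w_root, where p="w^4" and q="w*(w-1)*x - (w-1)"])
      (simp add: algebra_simps eval_nat_numeral)
  have red1a: "res_parity (int m) (w*t1 + (1-w)) = res_parity (int m) (w*x + w^2)"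
    by (rule res_parity_cong, rule dvd_combination2[OF i1(3)[folded t1_def] w_root, where p="w" and q="-2*(w-1) - 1"])
      (simp add: algebra_simps eval_nat_numeral)
  have red1b: "res_parity (int m) (w^2*(w^2*t1) + 1) = res_parity (int m) (w*x - 1)"
    by (rule res_parity_cong, rule dvd_combination2[OF i1(3)[folded t1_def] w_root, where p="w^4" and q="w*(w-1)*x - 2*(w^3+1)*(w-1)"])
      (simp add: algebra_simps eval_nat_numeral)
  have "\<not> int m dvd u \<longrightarrow> odd (par_diff 1 2 i0 - par_diff 1 2 i1)"
  proof
    assume nu: "\<not> int m dvd u"
    have nd: "\<not> int m dvd (w*x - 1)"
    proof
      assume h: "int m dvd (w*x - 1)"
      have "int m dvd u"
        by (rule dvd_combination2[OF u_eq h, where p="-1" and q="1-w"])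
          (simp add: algebra_simps eval_nat_numeral)
      then show False using nu by simp
    qed
    have "odd (res_parity (int m) (w*x - 1) + res_parity (int m) (w*x - 1 + 1))"
      by (rule odd_res_parity_add_succ[OF m_gt_1 m_odd nd])
    then have "odd (res_parity (int m) (w*x - 1) + res_parity (int m) (w*x))" by simp
    then show "odd (par_diff 1 2 i0 - par_diff 1 2 i1)"
      unfolding par0 par1 red0a red0b red1a red1b by presburger
  qed
  then show ?thesis using i0(1) i1(1) hit0 hit1 by blast
qed

lemma res_parity_neg_w: "res_parity (int m) (-w) = 0"
  by (rule res_parity_neg_odd[OF w_pos w_less_m w_odd m_odd])

lemma odd_par_diff_1_2: "i < 2*m \<Longrightarrow> int m dvd res_diff 1 2 i \<Longrightarrow> odd (par_diff 1 2 i)"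
proof -
  assume i: "i < 2*m" and d: "int m dvd res_diff 1 2 i"
  define s where "s = int (i div m)"
  define t where "t = int (i mod m)"
  have s01: "s = 0 \<or> s = 1" using row_block_cases[OF i] s_def by simp
  have "res_diff 1 2 i = (1-w)*(w*t + 2*s - 1)"
    unfolding res_diff_def res_col_def col_res_def s_def[symmetric] t_def[symmetric] by (simp add: algebra_simps eval_nat_numeral)
  then have R: "int m dvd (w*t + 2*s - 1)"
    using d coprime_dvd_mult_right_iff[OF coprime_m_one_minus_w] by metis
  have par_eq: "par_diff 1 2 i = res_parity (int m) (w*t + (1-w)*s) - res_parity (int m) (w^2*(w^2*t + (1-w)*(1-s)) + 1)"
    unfolding par_diff_def par_col_def col_par_def col_res_def s_def[symmetric] t_def[symmetric] by simp
  show ?thesis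
  proof (cases "s = 0")
    case True
    have R0: "int m dvd (w*t - 1)" using R True by simp
    have "res_parity (int m) (w*t + (1-w)*s) = res_parity (int m) 1"
      by (rule res_parity_cong, rule dvd_combination1[OF R0, where p=1]) (simp add: True)
    moreover have "res_parity (int m) (w^2*(w^2*t + (1-w)*(1-s)) + 1) = res_parity (int m) (-w)"
      by (rule res_parity_cong, rule dvd_combination2[OF R0 w_root, where p="w^3" and q=1])
        (simp add: True algebra_simps eval_nat_numeral)
    ultimately show ?thesis unfolding par_eq res_parity_neg_w using res_parity_1[OF m_gt_1] by simp
  next
    case False
    then have s1: "s = 1" using s01 by simp
    have R1: "int m dvd (w*t + 1)" using R s1 by (simp add: add.commute)
    have "res_parity (int m) (w*t + (1-w)*s) = res_parity (int m) (-w)"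
      by (rule res_parity_cong, rule dvd_combination1[OF R1, where p=1]) (simp add: s1)
    moreover have "res_parity (int m) (w^2*(w^2*t + (1-w)*(1-s)) + 1) = res_parity (int m) 0"
      by (rule res_parity_cong, rule dvd_combination2[OF R1 w_root, where p="w^3" and q="-(w-1)"])
        (simp add: s1 algebra_simps eval_nat_numeral)
    ultimately show ?thesis unfolding par_eq res_parity_neg_w res_parity_0 by simp
  qed
qed


lemma split_res_col_0:
  "\<exists>i0<2*m. \<exists>i1<2*m. int m dvd (res_col 0 i0 - u) \<and> int m dvd (res_col 0 i1 - u) \<and>
    odd (par_col 0 i0 - par_col 0 i1)"
proof -
  obtain i0 where i0: "i0 < 2*m" "int (i0 div m) = 0" "int m dvd (int (i0 mod m) - u)"
    using exists_row_index[of m 0 u] m_pos by auto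
  obtain i1 where i1: "i1 < 2*m" "int (i1 div m) = 1" "int m dvd (int (i1 mod m) - u)"
    using exists_row_index[of m 1 u] m_pos by auto
  have "res_col 0 i0 = int (i0 mod m)" "res_col 0 i1 = int (i1 mod m)" "par_col 0 i0 = 0" "par_col 0 i1 = 1"
    unfolding res_col_def par_col_def col_res_def col_par_def using i0 i1 by simp_all
  then show ?thesis using i0 i1 by fastforce
qed

lemma split_res_col_1:
  "\<exists>i0<2*m. \<exists>i1<2*m. int m dvd (res_col 1 i0 - u) \<and> int m dvd (res_col 1 i1 - u) \<and>
    odd (par_col 1 i0 - par_col 1 i1)"
proof -
  obtain i0 where i0: "i0 < 2*m" "int (i0 div m) = 0" "int m dvd (int (i0 mod m) - w^2*u)"
    using exists_row_index[of m 0 "w^2*u"] m_pos by auto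
  obtain i1 where i1: "i1 < 2*m" "int (i1 div m) = 1" "int m dvd (int (i1 mod m) - w^2*(u-1+w))"
    using exists_row_index[of m 1 "w^2*(u-1+w)"] m_pos by auto
  define t0 where "t0 = int (i0 mod m)"
  define t1 where "t1 = int (i1 mod m)"
  have res0: "res_col 1 i0 = w*t0" and res1: "res_col 1 i1 = w*t1 + (1-w)"
    unfolding res_col_def col_res_def using i0 i1 by (simp_all add: t0_def t1_def)
  have par0: "par_col 1 i0 = res_parity (int m) (w*t0)"
    and par1: "par_col 1 i1 = 1 + res_parity (int m) (w*t1 + (1-w))"
    unfolding par_col_def col_par_def col_res_def using i0 i1 by (simp_all add: t0_def t1_def)
  have hit0: "int m dvd (res_col 1 i0 - u)" unfolding res0
    by (rule dvd_combination2[OF i0(3)[folded t0_def] w_root, where p=w and q="(w-1)*u"])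
      (simp add: algebra_simps eval_nat_numeral)
  have hit1: "int m dvd (res_col 1 i1 - u)" unfolding res1
    by (rule dvd_combination2[OF i1(3)[folded t1_def] w_root, where p=w and q="(w-1)*(u-1+w)"])
      (simp add: algebra_simps eval_nat_numeral)
  have "res_parity (int m) (w*t0) = res_parity (int m) (w*t1 + (1-w))"
    by (rule res_parity_cong, rule dvd_diff_common[OF hit0[unfolded res0] hit1[unfolded res1]])
  then have "odd (par_col 1 i0 - par_col 1 i1)" unfolding par0 par1 by simp
  then show ?thesis using i0(1) i1(1) hit0 hit1 by blast
qed

lemma split_res_col_2:
  "\<exists>i0<2*m. \<exists>i1<2*m. int m dvd (res_col 2 i0 - u) \<and> int m dvd (res_col 2 i1 - u) \<and>
    odd (par_col 2 i0 - par_col 2 i1)"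
proof -
  obtain i0 where i0: "i0 < 2*m" "int (i0 div m) = 0" "int m dvd (int (i0 mod m) - w*(u-1+w))"
    using exists_row_index[of m 0 "w*(u-1+w)"] m_pos by auto
  obtain i1 where i1: "i1 < 2*m" "int (i1 div m) = 1" "int m dvd (int (i1 mod m) - w*u)"
    using exists_row_index[of m 1 "w*u"] m_pos by auto
  define t0 where "t0 = int (i0 mod m)"
  define t1 where "t1 = int (i1 mod m)"
  have res0: "res_col 2 i0 = w^2*t0 + (1-w)" and res1: "res_col 2 i1 = w^2*t1"
    unfolding res_col_def col_res_def using i0 i1 by (simp_all add: t0_def t1_def)
  have par0: "par_col 2 i0 = res_parity (int m) (w^2*(w^2*t0 + (1-w)) + 1)"
    and par1: "par_col 2 i1 = 1 + res_parity (int m) (w^2*(w^2*t1) + 1)"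
    unfolding par_col_def col_par_def col_res_def using i0 i1 by (simp_all add: t0_def t1_def)
  have hit0: "int m dvd (res_col 2 i0 - u)" unfolding res0
    by (rule dvd_combination2[OF i0(3)[folded t0_def] w_root, where p="w^2" and q="(w-1)*(u-1+w)"])
      (simp add: algebra_simps eval_nat_numeral)
  have hit1: "int m dvd (res_col 2 i1 - u)" unfolding res1
    by (rule dvd_combination2[OF i1(3)[folded t1_def] w_root, where p="w^2" and q="(w-1)*u"])
      (simp add: algebra_simps eval_nat_numeral)
  have dd: "int m dvd ((w^2*t0 + (1-w)) - w^2*t1)"
    by (rule dvd_diff_common[OF hit0[unfolded res0] hit1[unfolded res1]])
  have "res_parity (int m) (w^2*(w^2*t0 + (1-w)) + 1) = res_parity (int m) (w^2*(w^2*t1) + 1)"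
    by (rule res_parity_cong, rule dvd_combination1[OF dd, where p="w^2"]) (simp add: algebra_simps)
  then have "odd (par_col 2 i0 - par_col 2 i1)" unfolding par0 par1 by simp
  then show ?thesis using i0(1) i1(1) hit0 hit1 by blast
qed

lemma dca_array_cong_res: "i < 2*m \<Longrightarrow> j < 3 \<Longrightarrow> int m dvd (dca_array m w i j - res_col j i)"
  unfolding dca_array_def res_col_def using crt_pair_cong_mod by simp

lemma dca_array_cong_par: "i < 2*m \<Longrightarrow> j < 3 \<Longrightarrow> 2 dvd (dca_array m w i j - par_col j i)"
  unfolding dca_array_def par_col_def using crt_pair_cong_2[OF m_odd] by simp

lemma dca_array_range: "0 \<le> dca_array m w i j \<and> dca_array m w i j < 2 * int m"
  unfolding dca_array_def using crt_pair_range[of "int m"] m_gt_1 by auto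

lemma dca_array_last_row: "dca_array m w (2*m) j = 0" unfolding dca_array_def by simp

lemma dca_array_last_col: "dca_array m w i 3 = 0" unfolding dca_array_def by simp

lemma col_differences_nonzero_if_split:
  assumes jk: "j < 3" "k < 3"
    and split: "\<And>u. \<exists>i0<2*m. \<exists>i1<2*m. int m dvd (res_diff j k i0 - u) \<and>
                  int m dvd (res_diff j k i1 - u) \<and>
                  (\<not> int m dvd u \<longrightarrow> odd (par_diff j k i0 - par_diff j k i1))"
    and zero_odd: "\<And>i. i < 2*m \<Longrightarrow> int m dvd res_diff j k i \<Longrightarrow> odd (par_diff j k i)"
  shows "(\<lambda>i. (dca_array m w i j - dca_array m w i k) mod (2*int m)) ` {..<2*m} = {1..<2*int m}"
    and "(\<lambda>i. (dca_array m w i k - dca_array m w i j) mod (2*int m)) ` {..<2*m} = {1..<2*int m}"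
proof -
  have res: "int m dvd ((dca_array m w i j - dca_array m w i k) - res_diff j k i)"
    if "i < 2*m" for i
    using dvd_diff[OF dca_array_cong_res[OF that jk(1)] dca_array_cong_res[OF that jk(2)]]
    by (simp add: res_diff_def algebra_simps)
  have par: "2 dvd ((dca_array m w i j - dca_array m w i k) - par_diff j k i)"
    if "i < 2*m" for i
    using dvd_diff[OF dca_array_cong_par[OF that jk(1)] dca_array_cong_par[OF that jk(2)]]
    by (simp add: par_diff_def algebra_simps)
  show "(\<lambda>i. (dca_array m w i j - dca_array m w i k) mod (2*int m)) ` {..<2*m} = {1..<2*int m}"
    by (rule diff_residues_eq_nonzero[OF m_gt_1 m_odd res par split zero_odd])
  have "(\<lambda>i. (- (dca_array m w i j - dca_array m w i k)) mod (2*int m)) ` {..<2*m}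
        = {1..<2*int m}"
    by (rule neg_diff_residues_eq_nonzero[OF m_gt_1 m_odd res par split zero_odd])
  then show "(\<lambda>i. (dca_array m w i k - dca_array m w i j) mod (2*int m)) ` {..<2*m}
             = {1..<2*int m}"
    by simp
qed

lemma col_differences_nonzero:
  assumes "j < 3" "k < 3" "j \<noteq> k"
  shows "(\<lambda>i. (dca_array m w i j - dca_array m w i k) mod (2*int m)) ` {..<2*m} = {1..<2*int m}"
proof -
  note d01 = col_differences_nonzero_if_split[of 0 1, OF _ _ split_res_diff_0_1 odd_par_diff_0_1]
  note d02 = col_differences_nonzero_if_split[of 0 2, OF _ _ split_res_diff_0_2 odd_par_diff_0_2]
  note d12 = col_differences_nonzero_if_split[of 1 2, OF _ _ split_res_diff_1_2 odd_par_diff_1_2]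
  have "(j, k) \<in> {(0, 1), (1, 0), (0, 2), (2, 0), (1, 2), (2, 1)}" using assms by auto
  then show ?thesis using d01 d02 d12 by auto
qed

lemma col_hits_residue:
  assumes j: "j < 3" and g: "0 \<le> g" "g < 2 * int m"
  shows "\<exists>i<2*m. dca_array m w i j mod (2*int m) = g"
proof -
  have "j = 0 \<or> j = 1 \<or> j = 2" using j by auto
  then have split: "\<exists>i0<2*m. \<exists>i1<2*m. int m dvd (res_col j i0 - g) \<and>
                      int m dvd (res_col j i1 - g) \<and> odd (par_col j i0 - par_col j i1)"
    using split_res_col_0 split_res_col_1 split_res_col_2 by blast
  show ?thesis
    using residue_hits[where D="\<lambda>i. dca_array m w i j" and G="res_col j" and A="par_col j",
        OF m_odd dca_array_cong_res[OF _ j] dca_array_cong_par[OF _ j] split g]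
    by simp
qed

lemma col_neg_hits_residue:
  assumes j: "j < 3" and g: "0 \<le> g" "g < 2 * int m"
  shows "\<exists>i<2*m. (- dca_array m w i j) mod (2*int m) = g"
proof -
  obtain i where i: "i < 2*m" "dca_array m w i j mod (2*int m) = (- g) mod (2*int m)"
    using col_hits_residue[OF j, of "(- g) mod (2*int m)"] m_pos by auto
  then have "(- dca_array m w i j) mod (2*int m) = g mod (2*int m)"
    by (metis mod_minus_eq minus_minus)
  then show ?thesis using i(1) g by auto
qed

lemma dca_array_is_cyclic_DCA: "is_cyclic_DCA 4 (2*m + 1) (2*m) (dca_array m w)"
  unfolding is_cyclic_DCA_def
proof (intro conjI allI impI ballI)
  fix i j
  show "dca_array m w i j \<in> {0..<int (2*m)}" using dca_array_range by simp
next
  fix j j' :: nat and g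
  assume j: "j < 4" and j': "j' < 4" and ne: "j \<noteq> j'" and g: "g \<in> {0..<int (2*m)}"
  show "\<exists>i<2*m + 1. (dca_array m w i j - dca_array m w i j') mod int (2*m) = g"
  proof (cases "g = 0")
    case True
    then show ?thesis using dca_array_last_row by (intro exI[of _ "2*m"]) simp
  next
    case False
    then have g1: "g \<in> {1..<2*int m}" using g by auto
    consider "j < 3" "j' < 3" | "j' = 3" "j < 3" | "j = 3" "j' < 3" using j j' ne by linarith
    then have "\<exists>i<2*m. (dca_array m w i j - dca_array m w i j') mod (2*int m) = g"
    proof cases
      case 1
      then have "g \<in> (\<lambda>i. (dca_array m w i j - dca_array m w i j') mod (2*int m)) ` {..<2*m}"
        using col_differences_nonzero[OF 1 ne] g1 by simp
      then show ?thesis by auto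
    next
      case 2
      then show ?thesis using col_hits_residue[of j g] g1 dca_array_last_col by auto
    next
      case 3
      then show ?thesis using col_neg_hits_residue[of j' g] g1 dca_array_last_col by auto
    qed
    then show ?thesis by (metis less_SucI add.commute plus_1_eq_Suc of_nat_mult of_nat_numeral)
  qed
qed

lemma dca_array_normalized: "DCA_normalized 4 (2*m) (dca_array m w)"
  unfolding DCA_normalized_def using dca_array_last_row dca_array_last_col by simp

lemma dca_array_P1: "DCA_P1 4 (2*m) (dca_array m w)"
  unfolding DCA_P1_def
proof (intro allI impI)
  fix j :: nat assume j: "j < 4"
  obtain i where i: "i < 2*m" "dca_array m w i j = 0"
  proof (cases "j = 3")
    case True
    then show ?thesis using that[of 0] dca_array_last_col m_pos by simp
  next
    case False
    then obtain i where i: "i < 2*m" "dca_array m w i j mod (2*int m) = 0"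
      using col_hits_residue[of j 0] j m_pos by auto
    then have "dca_array m w i j = 0" using dca_array_range[of i j] by simp
    then show ?thesis using that i by blast
  qed
  then have "{i, 2*m} \<subseteq> {i. i \<le> 2*m \<and> dca_array m w i j = 0}"
    using dca_array_last_row by auto
  from card_mono[OF _ this] show "2 \<le> card {i. i \<le> 2*m \<and> dca_array m w i j = 0}"
    using i(1) by simp
qed

lemma dca_array_P2: "DCA_P2 4 (2*m) (dca_array m w)"
  unfolding DCA_P2_def using col_differences_nonzero by simp

end

text \<open>A common divisor of \<open>1 - w\<close> and \<open>M\<close> divides \<open>3 = (w\<^sup>2 + w + 1) + (w + 2)(1 - w)\<close>,
  hence \<open>F + 2 = 3 - (1 - w) + M\<close>, hence \<open>gcd (F + 2) (2M) = 2\<close>, hence \<open>1\<close>.\<close>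

lemma coprime_one_minus_root:
  fixes w M F :: int
  assumes root: "M dvd (w^2 + w + 1)" and gcd: "gcd (F + 2) (2*M) = 2" and w: "w = F - M"
  shows "coprime (1 - w) M"
proof (rule coprimeI)
  fix c assume c1: "c dvd (1 - w)" and c2: "c dvd M"
  have "c dvd 3"
    by (rule dvd_combination2[OF dvd_trans[OF c2 root] c1, where p=1 and q="w + 2"])
      (simp add: algebra_simps power2_eq_square)
  moreover have "c dvd (F + 2)"
    by (rule dvd_combination3[OF c1 c2 \<open>c dvd 3\<close>, where p="-1" and q=1 and r=1])
      (simp add: w)
  then have "c dvd 2" using gcd_greatest[of c "F + 2" "2*M"] c2 gcd by simp
  ultimately have "c dvd 1" using dvd_combination2[of c 3 2 1 1 "-1"] by simp
  then show "is_unit c" by simp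
qed

lemma dca_params_of_f:
  fixes f m :: nat
  assumes "gcd f (2 * m) = 2"
    and "gcd (f + 2) (2 * m) = 2"
    and "(f ^ 2 + f + 1) mod (2 * m) = m mod (2 * m)"
    and "m + 3 \<le> f" and "f \<le> 2 * m - 4"
  shows "dca_params m (int f - int m)"
proof -
  define M where "M = int m"
  define F where "F = int f"
  define w where "w = F - M"
  have bounds: "M + 3 \<le> F" "F \<le> 2*M - 4" using assms(4,5) unfolding F_def M_def by linarith+
  have "2*M dvd (F^2 + F + 1 - M)"
  proof -
    have "(F^2 + F + 1) mod (2*M) = M mod (2*M)"
      using arg_cong[OF assms(3), of int] unfolding F_def M_def by (simp add: of_nat_mod ac_simps)
    then show ?thesis by (simp only: mod_eq_dvd_iff)
  qed
  then have Mdvd: "M dvd (F^2 + F + 1 - M)" and even: "2 dvd (F^2 + F + 1 - M)"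
    using dvd_mult_left dvd_mult_right by blast+
  have "even F" using assms(1) unfolding F_def by (metis gcd_dvd1 even_of_nat)
  then have odd_M: "odd M" using even by auto
  have root: "M dvd (w^2 + w + 1)"
    by (rule dvd_combination2[OF Mdvd dvd_refl, where p=1 and q="M - 2*F"])
      (simp add: w_def algebra_simps power2_eq_square)
  have "gcd (F + 2) (2*M) = 2"
    using assms(2) unfolding F_def M_def by (metis gcd_int_int_eq of_nat_add of_nat_mult of_nat_numeral)
  then have "coprime (1 - w) M" using coprime_one_minus_root[OF root] w_def by blast
  moreover have "odd w" using \<open>even F\<close> odd_M unfolding w_def by simp
  ultimately show ?thesis
    using bounds odd_M root unfolding dca_params_def w_def M_def F_def by simp
qed

theorem mainTheorem2:
  fixes f m :: nat
  assumes "gcd f (2 * m) = 2"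
    and "gcd (f + 2) (2 * m) = 2"
    and "(f ^ 2 + f + 1) mod (2 * m) = m mod (2 * m)"
    and "m + 3 \<le> f" and "f \<le> 2 * m - 4"
  shows "\<exists>Q. is_cyclic_DCA 4 (2 * m + 1) (2 * m) Q \<and> DCA_normalized 4 (2 * m) Q
             \<and> DCA_P1 4 (2 * m) Q \<and> DCA_P2 4 (2 * m) Q"
proof -
  interpret dca_params m "int f - int m"
    using dca_params_of_f[OF assms] .
  show ?thesis
    using dca_array_is_cyclic_DCA dca_array_normalized dca_array_P1 dca_array_P2 by blast
qed

end
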